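(* Let $\mathcal{G}\rightrightarrows M$ be a topological groupoid such that $M$ is Hausdorff. Then $$\{B\subset\mathcal{G}:\ \forall K\subset\mathcal{G}\text{ compact }\exists K'\subset\mathcal{G}\text{ compact with }KB\cup BK\subset K'\}$$ $$=\{B\subset\mathcal{G}:\ \forall K\subset M\text{ compact }\exists K'\subset\mathcal{G}\text{ compact with }(B\cap t^{-1}(K))\cup(B\cap s^{-1}(K))\subset K'\},$$ and this family $\mathcal{B}_\mathcal{G}$ is a base-bounded compatible bornology on $\mathcal{G}$ containing all compact subsets of $\mathcal{G}$.
   Context: A topological groupoid $\mathcal{G}\rightrightarrows M$ is a groupoid (arrows $\mathcal{G}$, objects $M$, target and source $t,s$, units $1_x$, inverses, multiplication $g_1g_2$ defined when $s(g_1)=t(g_2)$) with $\mathcal{G}$, $M$ topological spaces and all structure maps continuous (multiplication on the subspace of composable pairs of $\mathcal{G}\times\mathcal{G}$). For $A,B\subset\mathcal{G}$, $AB=\{ab:a\in A,b\in B,s(a)=t(b)\}$ and $B^{-1}=\{b^{-1}:b\in B\}$. A bornology on a set $X$ is a family $\mathcal{B}$ of subsets closed under taking subsets and finite unions with $\bigcup\mathcal{B}=X$. A bornology on $\mathcal{G}$ is compatible if $B^{-1}\in\mathcal{B}$ and $BB'\in\mathcal{B}$ for all $B,B'\in\mathcal{B}$, and base-bounded if $1_M=\{1_x:x\in M\}\in\mathcal{B}$. *)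

theory Defs
  imports "HOL-Analysis.Analysis"
begin

text \<open>A topological groupoid with arrow space TG (arrows = topspace TG) and
object space TM (objects = topspace TM); target tg, source sc, units un,
inverse iv, multiplication mul (mul g h defined when sc g = tg h).\<close>

definition composable_pairs ::
  "'g topology \<Rightarrow> ('g \<Rightarrow> 'm) \<Rightarrow> ('g \<Rightarrow> 'm) \<Rightarrow> ('g \<times> 'g) set" where
  "composable_pairs TG tg sc = {(g, h). g \<in> topspace TG \<and> h \<in> topspace TG \<and> sc g = tg h}"

definition topological_groupoid ::
  "'g topology \<Rightarrow> 'm topology \<Rightarrow> ('g \<Rightarrow> 'm) \<Rightarrow> ('g \<Rightarrow> 'm) \<Rightarrow> ('m \<Rightarrow> 'g)
   \<Rightarrow> ('g \<Rightarrow> 'g) \<Rightarrow> ('g \<Rightarrow> 'g \<Rightarrow> 'g) \<Rightarrow> bool" where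
  "topological_groupoid TG TM tg sc un iv mul \<longleftrightarrow>
     (\<forall>g\<in>topspace TG. tg g \<in> topspace TM \<and> sc g \<in> topspace TM) \<and>
     (\<forall>x\<in>topspace TM. un x \<in> topspace TG \<and> tg (un x) = x \<and> sc (un x) = x) \<and>
     (\<forall>g\<in>topspace TG. \<forall>h\<in>topspace TG. sc g = tg h \<longrightarrow>
         mul g h \<in> topspace TG \<and> tg (mul g h) = tg g \<and> sc (mul g h) = sc h) \<and>
     (\<forall>g\<in>topspace TG. \<forall>h\<in>topspace TG. \<forall>k\<in>topspace TG.
         sc g = tg h \<longrightarrow> sc h = tg k \<longrightarrow> mul (mul g h) k = mul g (mul h k)) \<and>
     (\<forall>g\<in>topspace TG. mul (un (tg g)) g = g \<and> mul g (un (sc g)) = g) \<and>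
     (\<forall>g\<in>topspace TG. iv g \<in> topspace TG \<and> tg (iv g) = sc g \<and> sc (iv g) = tg g \<and>
         mul g (iv g) = un (tg g) \<and> mul (iv g) g = un (sc g)) \<and>
     continuous_map TG TM tg \<and> continuous_map TG TM sc \<and>
     continuous_map TM TG un \<and> continuous_map TG TG iv \<and>
     continuous_map (subtopology (prod_topology TG TG) (composable_pairs TG tg sc)) TG
        (\<lambda>(g, h). mul g h)"

definition setmul :: "('g \<Rightarrow> 'm) \<Rightarrow> ('g \<Rightarrow> 'm) \<Rightarrow> ('g \<Rightarrow> 'g \<Rightarrow> 'g) \<Rightarrow> 'g set \<Rightarrow> 'g set \<Rightarrow> 'g set" where
  "setmul tg sc mul A B = {mul a b | a b. a \<in> A \<and> b \<in> B \<and> sc a = tg b}"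

definition bornology :: "'a set \<Rightarrow> 'a set set \<Rightarrow> bool" where
  "bornology X \<B> \<longleftrightarrow> \<B> \<subseteq> Pow X \<and>
     (\<forall>B\<in>\<B>. \<forall>C. C \<subseteq> B \<longrightarrow> C \<in> \<B>) \<and>
     {} \<in> \<B> \<and> (\<forall>B\<in>\<B>. \<forall>C\<in>\<B>. B \<union> C \<in> \<B>) \<and>
     \<Union>\<B> = X"

definition compatible_bornology ::
  "('g \<Rightarrow> 'm) \<Rightarrow> ('g \<Rightarrow> 'm) \<Rightarrow> ('g \<Rightarrow> 'g) \<Rightarrow> ('g \<Rightarrow> 'g \<Rightarrow> 'g) \<Rightarrow> 'g set set \<Rightarrow> bool" where
  "compatible_bornology tg sc iv mul \<B> \<longleftrightarrow>
     (\<forall>B\<in>\<B>. iv ` B \<in> \<B>) \<and> (\<forall>B\<in>\<B>. \<forall>C\<in>\<B>. setmul tg sc mul B C \<in> \<B>)"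

definition base_bounded :: "'m set \<Rightarrow> ('m \<Rightarrow> 'g) \<Rightarrow> 'g set set \<Rightarrow> bool" where
  "base_bounded M un \<B> \<longleftrightarrow> un ` M \<in> \<B>"

end

theory Submission
  imports Defs
begin

text \<open>
  Products of compact sets of arrows are compact: the composable pairs are the preimage of the
  diagonal of the Hausdorff space \<open>M\<close> under \<open>s \<times> t\<close>, hence closed, and multiplication is
  continuous on them.  Multiplying \<open>B\<close> by a compact \<open>K\<close> only involves the arrows of \<open>B\<close> with
  target in \<open>s(K)\<close> resp. source in \<open>t(K)\<close>, while conversely the arrows of \<open>B\<close> over a compact
  \<open>L \<subseteq> M\<close> lie in \<open>1\<^sub>L B \<union> B 1\<^sub>L\<close>; this proves that the two families agree.  The
  second description makes closure under inversion and the boundedness of the units evident,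
  the first one closure under products, by associativity.
\<close>

text \<open>Weaker than relative compactness, since the arrow space need not be Hausdorff.\<close>
definition compactly_bounded :: "'a topology \<Rightarrow> 'a set \<Rightarrow> bool" where
  "compactly_bounded X S \<longleftrightarrow> (\<exists>K. compactin X K \<and> S \<subseteq> K)"

lemma compactin_imp_compactly_bounded: "compactin X K \<Longrightarrow> compactly_bounded X K"
  unfolding compactly_bounded_def by blast

lemma compactly_bounded_subset:
  "compactly_bounded X T \<Longrightarrow> S \<subseteq> T \<Longrightarrow> compactly_bounded X S"
  unfolding compactly_bounded_def by blast

lemma compactly_bounded_Un_iff:
  "compactly_bounded X (S \<union> T) \<longleftrightarrow> compactly_bounded X S \<and> compactly_bounded X T"
  unfolding compactly_bounded_def by (meson compactin_Un le_sup_iff sup_mono)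

lemma compactly_bounded_image:
  "continuous_map X Y f \<Longrightarrow> compactly_bounded X S \<Longrightarrow> compactly_bounded Y (f ` S)"
  unfolding compactly_bounded_def by (meson image_compactin image_mono)

lemma setmul_mono:
  "A \<subseteq> A' \<Longrightarrow> B \<subseteq> B' \<Longrightarrow> setmul tg sc mul A B \<subseteq> setmul tg sc mul A' B'"
  unfolding setmul_def by blast

lemma setmul_Un_left:
  "setmul tg sc mul (A \<union> A') B = setmul tg sc mul A B \<union> setmul tg sc mul A' B"
  unfolding setmul_def by blast

lemma setmul_Un_right:
  "setmul tg sc mul A (B \<union> B') = setmul tg sc mul A B \<union> setmul tg sc mul A B'"
  unfolding setmul_def by blast

lemma setmul_subset_over_sources:
  "setmul tg sc mul K B \<subseteq> setmul tg sc mul K {g\<in>B. tg g \<in> sc ` K}"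
  unfolding setmul_def by force

lemma setmul_subset_over_targets:
  "setmul tg sc mul B K \<subseteq> setmul tg sc mul {g\<in>B. sc g \<in> tg ` K} K"
  unfolding setmul_def by force

locale top_groupoid =
  fixes TG :: "'g topology" and TM :: "'m topology"
    and tg sc :: "'g \<Rightarrow> 'm" and un :: "'m \<Rightarrow> 'g" and iv :: "'g \<Rightarrow> 'g"
    and mul :: "'g \<Rightarrow> 'g \<Rightarrow> 'g"
  assumes groupoid: "topological_groupoid TG TM tg sc un iv mul"
begin

abbreviation gmul :: "'g set \<Rightarrow> 'g set \<Rightarrow> 'g set" (infixl "\<cdot>" 70) where
  "A \<cdot> B \<equiv> setmul tg sc mul A B"

lemma
  shows tg_in: "g \<in> topspace TG \<Longrightarrow> tg g \<in> topspace TM"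
    and sc_in: "g \<in> topspace TG \<Longrightarrow> sc g \<in> topspace TM"
    and un_in: "x \<in> topspace TM \<Longrightarrow> un x \<in> topspace TG"
    and tg_un: "x \<in> topspace TM \<Longrightarrow> tg (un x) = x"
    and sc_un: "x \<in> topspace TM \<Longrightarrow> sc (un x) = x"
    and un_mul: "g \<in> topspace TG \<Longrightarrow> mul (un (tg g)) g = g"
    and mul_un: "g \<in> topspace TG \<Longrightarrow> mul g (un (sc g)) = g"
    and iv_in: "g \<in> topspace TG \<Longrightarrow> iv g \<in> topspace TG"
    and tg_iv: "g \<in> topspace TG \<Longrightarrow> tg (iv g) = sc g"
    and sc_iv: "g \<in> topspace TG \<Longrightarrow> sc (iv g) = tg g"
    and continuous_map_tg: "continuous_map TG TM tg"
    and continuous_map_sc: "continuous_map TG TM sc"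
    and continuous_map_un: "continuous_map TM TG un"
    and continuous_map_iv: "continuous_map TG TG iv"
    and continuous_map_mul:
      "continuous_map (subtopology (prod_topology TG TG) (composable_pairs TG tg sc)) TG
         (\<lambda>(g, h). mul g h)"
  using groupoid unfolding topological_groupoid_def by auto

lemma
  assumes "g \<in> topspace TG" "h \<in> topspace TG" "sc g = tg h"
  shows mul_in: "mul g h \<in> topspace TG"
    and tg_mul: "tg (mul g h) = tg g"
    and sc_mul: "sc (mul g h) = sc h"
  using groupoid assms unfolding topological_groupoid_def by auto

lemma mul_assoc:
  "\<lbrakk>g \<in> topspace TG; h \<in> topspace TG; k \<in> topspace TG; sc g = tg h; sc h = tg k\<rbrakk>
    \<Longrightarrow> mul (mul g h) k = mul g (mul h k)"
  using groupoid unfolding topological_groupoid_def by blast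

lemma setmul_subset_topspace:
  "A \<subseteq> topspace TG \<Longrightarrow> B \<subseteq> topspace TG \<Longrightarrow> A \<cdot> B \<subseteq> topspace TG"
  unfolding setmul_def using mul_in by blast

lemma setmul_assoc:
  assumes A: "A \<subseteq> topspace TG" and B: "B \<subseteq> topspace TG" and C: "C \<subseteq> topspace TG"
  shows "(A \<cdot> B) \<cdot> C = A \<cdot> (B \<cdot> C)"
proof
  show "(A \<cdot> B) \<cdot> C \<subseteq> A \<cdot> (B \<cdot> C)"
  proof
    fix x assume "x \<in> (A \<cdot> B) \<cdot> C"
    then obtain a b c where x: "x = mul (mul a b) c" and abc: "a \<in> A" "b \<in> B" "c \<in> C"
        and ab: "sc a = tg b" and abc_comp: "sc (mul a b) = tg c"
      unfolding setmul_def by blast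
    have top: "a \<in> topspace TG" "b \<in> topspace TG" "c \<in> topspace TG"
      using abc A B C by auto
    then have bc: "sc b = tg c"
      using abc_comp ab by (simp add: sc_mul)
    have "mul b c \<in> B \<cdot> C"
      unfolding setmul_def using abc bc by blast
    moreover have "sc a = tg (mul b c)"
      using ab bc top by (simp add: tg_mul)
    moreover have "x = mul a (mul b c)"
      using x top ab bc by (simp add: mul_assoc)
    ultimately show "x \<in> A \<cdot> (B \<cdot> C)"
      unfolding setmul_def using abc by blast
  qed
  show "A \<cdot> (B \<cdot> C) \<subseteq> (A \<cdot> B) \<cdot> C"
  proof
    fix x assume "x \<in> A \<cdot> (B \<cdot> C)"
    then obtain a b c where x: "x = mul a (mul b c)" and abc: "a \<in> A" "b \<in> B" "c \<in> C"
        and bc: "sc b = tg c" and abc_comp: "sc a = tg (mul b c)"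
      unfolding setmul_def by blast
    have top: "a \<in> topspace TG" "b \<in> topspace TG" "c \<in> topspace TG"
      using abc A B C by auto
    then have ab: "sc a = tg b"
      using abc_comp bc by (simp add: tg_mul)
    have "mul a b \<in> A \<cdot> B"
      unfolding setmul_def using abc ab by blast
    moreover have "sc (mul a b) = tg c"
      using ab bc top by (simp add: sc_mul)
    moreover have "x = mul (mul a b) c"
      using x top ab bc by (simp add: mul_assoc)
    ultimately show "x \<in> (A \<cdot> B) \<cdot> C"
      unfolding setmul_def using abc by blast
  qed
qed

lemma arrows_over_targets_subset_units_setmul:
  assumes "B \<subseteq> topspace TG"
  shows "{g\<in>B. tg g \<in> L} \<subseteq> un ` L \<cdot> B"
proof
  fix g assume g: "g \<in> {g\<in>B. tg g \<in> L}"
  with assms have "g = mul (un (tg g)) g" "sc (un (tg g)) = tg g"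
    by (auto simp: un_mul sc_un tg_in)
  with g show "g \<in> un ` L \<cdot> B"
    unfolding setmul_def by blast
qed

lemma arrows_over_sources_subset_setmul_units:
  assumes "B \<subseteq> topspace TG"
  shows "{g\<in>B. sc g \<in> L} \<subseteq> B \<cdot> un ` L"
proof
  fix g assume g: "g \<in> {g\<in>B. sc g \<in> L}"
  with assms have "g = mul g (un (sc g))" "sc g = tg (un (sc g))"
    by (auto simp: mul_un tg_un sc_in)
  with g show "g \<in> B \<cdot> un ` L"
    unfolding setmul_def by blast
qed

definition translation_bounded :: "'g set set" where
  "translation_bounded = {B. B \<subseteq> topspace TG \<and>
     (\<forall>K. compactin TG K \<longrightarrow> compactly_bounded TG (K \<cdot> B \<union> B \<cdot> K))}"

definition proper_bounded :: "'g set set" where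
  "proper_bounded = {B. B \<subseteq> topspace TG \<and>
     (\<forall>L. compactin TM L \<longrightarrow> compactly_bounded TG ({g\<in>B. tg g \<in> L} \<union> {g\<in>B. sc g \<in> L}))}"

lemma translation_bounded_subset_proper_bounded: "translation_bounded \<subseteq> proper_bounded"
proof
  fix B assume B: "B \<in> translation_bounded"
  then have Btop: "B \<subseteq> topspace TG"
    unfolding translation_bounded_def by blast
  have "compactly_bounded TG ({g\<in>B. tg g \<in> L} \<union> {g\<in>B. sc g \<in> L})" if "compactin TM L" for L
  proof (rule compactly_bounded_subset)
    show "compactly_bounded TG (un ` L \<cdot> B \<union> B \<cdot> un ` L)"
      using B image_compactin[OF that continuous_map_un] unfolding translation_bounded_def by blast
    show "{g\<in>B. tg g \<in> L} \<union> {g\<in>B. sc g \<in> L} \<subseteq> un ` L \<cdot> B \<union> B \<cdot> un ` L"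
      using arrows_over_targets_subset_units_setmul[OF Btop]
        arrows_over_sources_subset_setmul_units[OF Btop] by blast
  qed
  with Btop show "B \<in> proper_bounded"
    unfolding proper_bounded_def by blast
qed

lemma translation_bounded_downward_closed:
  assumes "B \<in> translation_bounded" and "C \<subseteq> B"
  shows "C \<in> translation_bounded"
proof -
  have "K \<cdot> C \<union> C \<cdot> K \<subseteq> K \<cdot> B \<union> B \<cdot> K" for K
    using \<open>C \<subseteq> B\<close> by (intro Un_mono setmul_mono) auto
  with assms show ?thesis
    unfolding translation_bounded_def by (blast intro: compactly_bounded_subset)
qed

lemma translation_bounded_Un:
  "B \<in> translation_bounded \<Longrightarrow> C \<in> translation_bounded \<Longrightarrow> B \<union> C \<in> translation_bounded"
  unfolding translation_bounded_def
  by (auto simp: setmul_Un_left setmul_Un_right compactly_bounded_Un_iff)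

lemma setmul_translation_bounded:
  assumes B: "B \<in> translation_bounded" and C: "C \<in> translation_bounded"
  shows "B \<cdot> C \<in> translation_bounded"
proof -
  have Btop: "B \<subseteq> topspace TG" and Ctop: "C \<subseteq> topspace TG"
    using B C unfolding translation_bounded_def by blast+
  have "compactly_bounded TG (K \<cdot> (B \<cdot> C) \<union> (B \<cdot> C) \<cdot> K)" if K: "compactin TG K" for K
  proof -
    have Ktop: "K \<subseteq> topspace TG"
      using K compactin_subset_topspace by blast
    obtain K1 where K1: "compactin TG K1" "K \<cdot> B \<union> B \<cdot> K \<subseteq> K1"
      using B K unfolding translation_bounded_def compactly_bounded_def by blast
    obtain K2 where K2: "compactin TG K2" "K \<cdot> C \<union> C \<cdot> K \<subseteq> K2"
      using C K unfolding translation_bounded_def compactly_bounded_def by blast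
    have "K \<cdot> (B \<cdot> C) = (K \<cdot> B) \<cdot> C"
      using Ktop Btop Ctop by (simp add: setmul_assoc)
    also have "\<dots> \<subseteq> K1 \<cdot> C"
      using K1(2) by (intro setmul_mono) auto
    finally have left: "K \<cdot> (B \<cdot> C) \<subseteq> K1 \<cdot> C" .
    have "(B \<cdot> C) \<cdot> K = B \<cdot> (C \<cdot> K)"
      using Ktop Btop Ctop by (simp add: setmul_assoc)
    also have "\<dots> \<subseteq> B \<cdot> K2"
      using K2(2) by (intro setmul_mono) auto
    finally have right: "(B \<cdot> C) \<cdot> K \<subseteq> B \<cdot> K2" .
    have "compactly_bounded TG (K1 \<cdot> C)" "compactly_bounded TG (B \<cdot> K2)"
      using B C K1(1) K2(1) unfolding translation_bounded_def compactly_bounded_Un_iff by blast+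
    with left right show ?thesis
      by (meson compactly_bounded_Un_iff compactly_bounded_subset)
  qed
  moreover have "B \<cdot> C \<subseteq> topspace TG"
    using Btop Ctop by (rule setmul_subset_topspace)
  ultimately show ?thesis
    unfolding translation_bounded_def by blast
qed

lemma inverse_proper_bounded:
  assumes B: "B \<in> proper_bounded"
  shows "iv ` B \<in> proper_bounded"
proof -
  have Btop: "B \<subseteq> topspace TG"
    using B unfolding proper_bounded_def by blast
  have "compactly_bounded TG ({g\<in>iv ` B. tg g \<in> L} \<union> {g\<in>iv ` B. sc g \<in> L})"
    if "compactin TM L" for L
  proof (rule compactly_bounded_subset)
    show "compactly_bounded TG (iv ` ({g\<in>B. tg g \<in> L} \<union> {g\<in>B. sc g \<in> L}))"
      using B that unfolding proper_bounded_def by (blast intro: compactly_bounded_image continuous_map_iv)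
    show "{g\<in>iv ` B. tg g \<in> L} \<union> {g\<in>iv ` B. sc g \<in> L}
        \<subseteq> iv ` ({g\<in>B. tg g \<in> L} \<union> {g\<in>B. sc g \<in> L})"
      using Btop by (auto simp: tg_iv sc_iv)
  qed
  moreover have "iv ` B \<subseteq> topspace TG"
    using Btop iv_in by blast
  ultimately show ?thesis
    unfolding proper_bounded_def by blast
qed

lemma units_proper_bounded: "un ` topspace TM \<in> proper_bounded"
proof -
  have "compactly_bounded TG ({g\<in>un ` topspace TM. tg g \<in> L} \<union> {g\<in>un ` topspace TM. sc g \<in> L})"
    if L: "compactin TM L" for L
  proof (rule compactly_bounded_subset)
    show "compactly_bounded TG (un ` L)"
      using L by (blast intro: compactly_bounded_image compactin_imp_compactly_bounded continuous_map_un)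
    show "{g\<in>un ` topspace TM. tg g \<in> L} \<union> {g\<in>un ` topspace TM. sc g \<in> L} \<subseteq> un ` L"
      by (auto simp: tg_un sc_un)
  qed
  moreover have "un ` topspace TM \<subseteq> topspace TG"
    using un_in by blast
  ultimately show ?thesis
    unfolding proper_bounded_def by blast
qed

end

locale Hausdorff_base_groupoid = top_groupoid +
  assumes Hausdorff_objects: "Hausdorff_space TM"
begin

lemma closedin_composable_pairs: "closedin (prod_topology TG TG) (composable_pairs TG tg sc)"
proof -
  have "continuous_map (prod_topology TG TG) (prod_topology TM TM) (\<lambda>p. (sc (fst p), tg (snd p)))"
    by (intro continuous_map_pairedI continuous_map_compose[OF continuous_map_fst continuous_map_sc, unfolded o_def]
        continuous_map_compose[OF continuous_map_snd continuous_map_tg, unfolded o_def])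
  moreover have "closedin (prod_topology TM TM) ((\<lambda>x. (x, x)) ` topspace TM)"
    using Hausdorff_objects Hausdorff_space_closedin_diagonal by blast
  ultimately have "closedin (prod_topology TG TG)
      {p \<in> topspace (prod_topology TG TG). (sc (fst p), tg (snd p)) \<in> (\<lambda>x. (x, x)) ` topspace TM}"
    by (rule closedin_continuous_map_preimage)
  moreover have "{p \<in> topspace (prod_topology TG TG). (sc (fst p), tg (snd p)) \<in> (\<lambda>x. (x, x)) ` topspace TM}
      = composable_pairs TG tg sc"
    unfolding composable_pairs_def by (auto simp: tg_in image_iff)
  ultimately show ?thesis
    by simp
qed

lemma compactin_setmul:
  assumes A: "compactin TG A" and B: "compactin TG B"
  shows "compactin TG (A \<cdot> B)"
proof -
  define P where "P = (A \<times> B) \<inter> composable_pairs TG tg sc"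
  have "compactin (prod_topology TG TG) (A \<times> B)"
    using A B by (simp add: compactin_Times)
  then have "compactin (prod_topology TG TG) P"
    unfolding P_def using closedin_composable_pairs by (rule compact_Int_closedin)
  then have "compactin (subtopology (prod_topology TG TG) (composable_pairs TG tg sc)) P"
    by (simp add: compactin_subtopology P_def)
  then have "compactin TG ((\<lambda>(g, h). mul g h) ` P)"
    using continuous_map_mul image_compactin by blast
  moreover have "(\<lambda>(g, h). mul g h) ` P = A \<cdot> B"
    using compactin_subset_topspace[OF A] compactin_subset_topspace[OF B]
    unfolding P_def setmul_def composable_pairs_def by auto
  ultimately show ?thesis
    by simp
qed

lemma compactly_bounded_setmul:
  assumes "compactly_bounded TG A" and "compactly_bounded TG B"
  shows "compactly_bounded TG (A \<cdot> B)"
proof -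
  obtain KA KB where "compactin TG KA" "A \<subseteq> KA" "compactin TG KB" "B \<subseteq> KB"
    using assms unfolding compactly_bounded_def by blast
  then have "compactin TG (KA \<cdot> KB)" "A \<cdot> B \<subseteq> KA \<cdot> KB"
    by (simp_all add: compactin_setmul setmul_mono)
  then show ?thesis
    unfolding compactly_bounded_def by blast
qed

lemma compactin_translation_bounded:
  assumes "compactin TG K"
  shows "K \<in> translation_bounded"
proof -
  have "compactly_bounded TG (L \<cdot> K \<union> K \<cdot> L)" if "compactin TG L" for L
    using that assms by (simp add: compactly_bounded_Un_iff compactin_imp_compactly_bounded compactin_setmul)
  with compactin_subset_topspace[OF assms] show ?thesis
    unfolding translation_bounded_def by blast
qed

lemma proper_bounded_subset_translation_bounded: "proper_bounded \<subseteq> translation_bounded"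
proof
  fix B assume "B \<in> proper_bounded"
  then have Btop: "B \<subseteq> topspace TG"
    and over: "\<And>L. compactin TM L \<Longrightarrow>
      compactly_bounded TG {g\<in>B. tg g \<in> L} \<and> compactly_bounded TG {g\<in>B. sc g \<in> L}"
    unfolding proper_bounded_def compactly_bounded_Un_iff by auto
  have "compactly_bounded TG (K \<cdot> B \<union> B \<cdot> K)" if K: "compactin TG K" for K
  proof (rule compactly_bounded_subset)
    have "compactly_bounded TG {g\<in>B. tg g \<in> sc ` K}"
      using over[OF image_compactin[OF K continuous_map_sc]] by blast
    moreover have "compactly_bounded TG {g\<in>B. sc g \<in> tg ` K}"
      using over[OF image_compactin[OF K continuous_map_tg]] by blast
    ultimately show "compactly_bounded TG (K \<cdot> {g\<in>B. tg g \<in> sc ` K} \<union> {g\<in>B. sc g \<in> tg ` K} \<cdot> K)"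
      using compactin_imp_compactly_bounded[OF K]
      by (simp add: compactly_bounded_Un_iff compactly_bounded_setmul)
    show "K \<cdot> B \<union> B \<cdot> K \<subseteq> K \<cdot> {g\<in>B. tg g \<in> sc ` K} \<union> {g\<in>B. sc g \<in> tg ` K} \<cdot> K"
      using setmul_subset_over_sources setmul_subset_over_targets by (rule Un_mono)
  qed
  with Btop show "B \<in> translation_bounded"
    unfolding translation_bounded_def by blast
qed

lemma translation_bounded_eq_proper_bounded: "translation_bounded = proper_bounded"
  using translation_bounded_subset_proper_bounded proper_bounded_subset_translation_bounded
  by (rule antisym)

lemma bornology_translation_bounded: "bornology (topspace TG) translation_bounded"
  unfolding bornology_def
proof (intro conjI ballI allI impI)
  show "translation_bounded \<subseteq> Pow (topspace TG)"
    unfolding translation_bounded_def by blast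
  show "{} \<in> translation_bounded"
    by (simp add: compactin_translation_bounded)
  show "\<Union> translation_bounded = topspace TG"
  proof
    show "\<Union> translation_bounded \<subseteq> topspace TG"
      unfolding translation_bounded_def by blast
    show "topspace TG \<subseteq> \<Union> translation_bounded"
      using compactin_translation_bounded[of "{_}"] by auto
  qed
qed (auto intro: translation_bounded_downward_closed translation_bounded_Un)

lemma compatible_bornology_translation_bounded:
  "compatible_bornology tg sc iv mul translation_bounded"
  unfolding compatible_bornology_def
proof (intro conjI ballI)
  show "iv ` B \<in> translation_bounded" if "B \<in> translation_bounded" for B
    using that inverse_proper_bounded by (simp add: translation_bounded_eq_proper_bounded)
  show "B \<cdot> C \<in> translation_bounded" if "B \<in> translation_bounded" "C \<in> translation_bounded" for B C
    using that by (rule setmul_translation_bounded)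
qed

lemma base_bounded_translation_bounded: "base_bounded (topspace TM) un translation_bounded"
  unfolding base_bounded_def translation_bounded_eq_proper_bounded
  by (rule units_proper_bounded)

end

theorem proposition7p5:
  fixes TG :: "'g topology" and TM :: "'m topology"
    and tg sc :: "'g \<Rightarrow> 'm" and un :: "'m \<Rightarrow> 'g" and iv :: "'g \<Rightarrow> 'g"
    and mul :: "'g \<Rightarrow> 'g \<Rightarrow> 'g"
  assumes "topological_groupoid TG TM tg sc un iv mul"
    and "Hausdorff_space TM"
  defines "BG \<equiv> {B. B \<subseteq> topspace TG \<and> (\<forall>K. compactin TG K \<longrightarrow>
              (\<exists>K'. compactin TG K' \<and> setmul tg sc mul K B \<union> setmul tg sc mul B K \<subseteq> K'))}"
  shows "BG = {B. B \<subseteq> topspace TG \<and> (\<forall>K. compactin TM K \<longrightarrow>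
              (\<exists>K'. compactin TG K' \<and> {g\<in>B. tg g \<in> K} \<union> {g\<in>B. sc g \<in> K} \<subseteq> K'))}
    \<and> bornology (topspace TG) BG
    \<and> compatible_bornology tg sc iv mul BG
    \<and> base_bounded (topspace TM) un BG
    \<and> (\<forall>K. compactin TG K \<longrightarrow> K \<in> BG)"
proof -
  interpret Hausdorff_base_groupoid TG TM tg sc un iv mul
    using assms(1,2) by unfold_locales
  have BG: "BG = translation_bounded"
    unfolding BG_def translation_bounded_def compactly_bounded_def ..
  have "BG = {B. B \<subseteq> topspace TG \<and> (\<forall>K. compactin TM K \<longrightarrow>
              (\<exists>K'. compactin TG K' \<and> {g\<in>B. tg g \<in> K} \<union> {g\<in>B. sc g \<in> K} \<subseteq> K'))}"
    unfolding BG translation_bounded_eq_proper_bounded proper_bounded_def compactly_bounded_def ..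
  then show ?thesis
    unfolding BG
    using bornology_translation_bounded compatible_bornology_translation_bounded
      base_bounded_translation_bounded compactin_translation_bounded by blast
qed

end
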